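(* Let $A\in\mathbb{R}^{n\times n}$, $1\le K<n$, $\lambda>0$, and $g\in\mathcal{G}$ with Lipschitz constant $\ell>0$ for $g'$, and set $\rho=3\lambda\ell$. For the ADMM iterates $\{(X_k,Y_k,\Lambda_k)\}$ described in the context (arbitrary initialization), for every $k\ge 1$, $$\mathcal{L}_\rho(X_k,Y_k,\Lambda_k)-\mathcal{L}_\rho(X_{k+1},Y_{k+1},\Lambda_{k+1})\ge \frac{7\ell\lambda}{6}\|Y_{k+1}-Y_k\|_F^2 .$$
   Context: $\mathcal{P}_K$ denotes the set of real symmetric $n\times n$ matrices $X$ with $X^2=X$ and $\mathrm{rank}(X)=K$. $\mathcal{G}$ is the class of functions $g:\mathbb{R}\to\mathbb{R}$ that are continuously differentiable, nonnegative, convex, and satisfy $|g'(x_1)-g'(x_2)|\le \ell|x_1-x_2|$ for all $x_1,x_2$. $\langle M,N\rangle=\mathrm{trace}(M^TN)$, $\|\cdot\|_F$ is the Frobenius norm. The augmented Lagrangian is $\mathcal{L}_\rho(X,Y,\Lambda)=\|A-X\|_F^2+\lambda\sum_{i,j}g(Y_{ij})+\frac{\rho}{2}\|X-Y\|_F^2+\langle\Lambda,X-Y\rangle$. The ADMM iteration is: $X_{k+1}\in\arg\min_{X\in\mathcal{P}_K}\mathcal{L}_\rho(X,Y_k,\Lambda_k)$; $Y_{k+1}=\arg\min_{Y\in\mathbb{R}^{n\times n}}\mathcal{L}_\rho(X_{k+1},Y,\Lambda_k)$; $\Lambda_{k+1}=\Lambda_k+\rho(X_{k+1}-Y_{k+1})$.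 *)

theory Defs
  imports "HOL-Analysis.Analysis"
begin

text \<open>Real n x n matrices are rendered as real^'n^'n (n = CARD('n)).\<close>

definition frob_inner :: "real^'n^'n \<Rightarrow> real^'n^'n \<Rightarrow> real" where
  "frob_inner M N = trace (transpose M ** N)"

definition frob_norm :: "real^'n^'n \<Rightarrow> real" where
  "frob_norm M = sqrt (\<Sum>i\<in>UNIV. \<Sum>j\<in>UNIV. (M $ i $ j)^2)"

definition proj_set :: "nat \<Rightarrow> (real^'n^'n) set" where
  "proj_set K = {X. transpose X = X \<and> X ** X = X \<and> rank X = K}"

definition in_class_G :: "(real \<Rightarrow> real) \<Rightarrow> (real \<Rightarrow> real) \<Rightarrow> real \<Rightarrow> bool" where
  "in_class_G g g' l \<longleftrightarrow>
     (\<forall>x. (g has_real_derivative g' x) (at x)) \<and> continuous_on UNIV g' \<and>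
     (\<forall>x. 0 \<le> g x) \<and> convex_on UNIV g \<and>
     (\<forall>x1 x2. \<bar>g' x1 - g' x2\<bar> \<le> l * \<bar>x1 - x2\<bar>)"

definition aug_lag ::
  "real^'n^'n \<Rightarrow> real \<Rightarrow> (real \<Rightarrow> real) \<Rightarrow> real \<Rightarrow>
   real^'n^'n \<Rightarrow> real^'n^'n \<Rightarrow> real^'n^'n \<Rightarrow> real" where
  "aug_lag A lam g rho X Y L =
     (frob_norm (A - X))^2 + lam * (\<Sum>i\<in>UNIV. \<Sum>j\<in>UNIV. g (Y $ i $ j))
     + rho / 2 * (frob_norm (X - Y))^2 + frob_inner L (X - Y)"

text \<open>ADMM iterates (arbitrary initialisation at index 0).\<close>
definition admm_iterates ::
  "real^'n^'n \<Rightarrow> real \<Rightarrow> (real \<Rightarrow> real) \<Rightarrow> real \<Rightarrow> nat \<Rightarrow>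
   (nat \<Rightarrow> real^'n^'n) \<Rightarrow> (nat \<Rightarrow> real^'n^'n) \<Rightarrow> (nat \<Rightarrow> real^'n^'n) \<Rightarrow> bool" where
  "admm_iterates A lam g rho K X Y L \<longleftrightarrow>
     (\<forall>k. X (Suc k) \<in> proj_set K \<and>
          (\<forall>Z\<in>proj_set K. aug_lag A lam g rho (X (Suc k)) (Y k) (L k)
                            \<le> aug_lag A lam g rho Z (Y k) (L k)) \<and>
          (\<forall>W. aug_lag A lam g rho (X (Suc k)) (Y (Suc k)) (L k)
                \<le> aug_lag A lam g rho (X (Suc k)) W (L k)) \<and>
          L (Suc k) = L k + rho *\<^sub>R (X (Suc k) - Y (Suc k)))"

end

theory Submission imports Defs begin

text \<open>Everything separates over matrix entries. The Y-step optimality condition reads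
  lambda g'(Y_{k+1}) = Lambda_{k+1}, so the multiplier jump rho (X_{k+1} - Y_{k+1}) equals
  lambda (g'(Y_{k+1}) - g'(Y_k)) and is bounded by lambda l |Y_{k+1} - Y_k|. The X-step does not
  increase the augmented Lagrangian; in the combined Y- and multiplier step, the tangent of the
  convex g at Y_{k+1} leaves a gain rho/2 |Y_{k+1} - Y_k|^2 against a loss
  |Lambda_{k+1} - Lambda_k|^2 / rho <= (lambda l)^2 / rho |Y_{k+1} - Y_k|^2, and rho = 3 lambda l
  gives 3/2 - 1/3 = 7/6.\<close>

lemma frob_inner_entrywise: "frob_inner M N = (\<Sum>i\<in>UNIV. \<Sum>j\<in>UNIV. M$i$j * N$i$j)"
proof -
  have "frob_inner M N = (\<Sum>j\<in>UNIV. \<Sum>i\<in>UNIV. M$i$j * N$i$j)"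
    unfolding frob_inner_def trace_def matrix_matrix_mult_def transpose_def by simp
  also have "\<dots> = (\<Sum>i\<in>UNIV. \<Sum>j\<in>UNIV. M$i$j * N$i$j)"
    by (rule sum.swap)
  finally show ?thesis .
qed

lemma frob_norm_power2: "(frob_norm M)^2 = (\<Sum>i\<in>UNIV. \<Sum>j\<in>UNIV. (M$i$j)^2)"
  unfolding frob_norm_def by (simp add: sum_nonneg)

definition aug_lag_entry ::
  "real \<Rightarrow> (real \<Rightarrow> real) \<Rightarrow> real \<Rightarrow> real \<Rightarrow> real \<Rightarrow> real \<Rightarrow> real \<Rightarrow> real" where
  "aug_lag_entry lam g rho a x y \<mu> = (a - x)^2 + lam * g y + rho/2 * (x - y)^2 + \<mu> * (x - y)"

lemma aug_lag_entrywise: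
  "aug_lag A lam g rho X Y L =
     (\<Sum>i\<in>UNIV. \<Sum>j\<in>UNIV. aug_lag_entry lam g rho (A$i$j) (X$i$j) (Y$i$j) (L$i$j))"
  unfolding aug_lag_def aug_lag_entry_def frob_inner_entrywise frob_norm_power2
  by (simp add: sum.distrib sum_distrib_left)

lemma entrywise_minimizer:
  fixes h :: "'n::finite \<Rightarrow> 'm::finite \<Rightarrow> real \<Rightarrow> real" and Y :: "real^'m^'n"
  assumes min: "\<forall>W::real^'m^'n. (\<Sum>a\<in>UNIV. \<Sum>b\<in>UNIV. h a b (Y$a$b)) \<le> (\<Sum>a\<in>UNIV. \<Sum>b\<in>UNIV. h a b (W$a$b))"
  shows "h i j (Y$i$j) \<le> h i j t"
proof -
  define W :: "real^'m^'n" where "W = (\<chi> a b. if a = i \<and> b = j then t else Y$a$b)"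
  have "\<And>a b. h a b (W$a$b) = h a b (Y$a$b) +
      (if b = j then if a = i then h i j t - h i j (Y$i$j) else 0 else 0)"
    unfolding W_def by auto
  then have "(\<Sum>a\<in>UNIV. \<Sum>b\<in>UNIV. h a b (W$a$b))
      = (\<Sum>a\<in>UNIV. \<Sum>b\<in>UNIV. h a b (Y$a$b)) + h i j t - h i j (Y$i$j)"
    by (simp add: sum.distrib)
  moreover have "(\<Sum>a\<in>UNIV. \<Sum>b\<in>UNIV. h a b (Y$a$b)) \<le> (\<Sum>a\<in>UNIV. \<Sum>b\<in>UNIV. h a b (W$a$b))"
    using min by blast
  ultimately show ?thesis
    by linarith
qed

lemma aug_lag_Y_minimizer_optimality:
  assumes deriv: "\<And>x. (g has_real_derivative g' x) (at x)"
    and min: "\<forall>W. aug_lag A lam g rho X Y L \<le> aug_lag A lam g rho X W L"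
  shows "lam * g' (Y$i$j) = L$i$j + rho * (X$i$j - Y$i$j)"
proof -
  let ?h = "\<lambda>a b. aug_lag_entry lam g rho (A$a$b) (X$a$b)"
  have loc: "?h i j (Y$i$j) (L$i$j) \<le> ?h i j t (L$i$j)" for t
    using entrywise_minimizer[where h = "\<lambda>a b y. ?h a b y (L$a$b)"] min
    by (simp add: aug_lag_entrywise)
  have "((\<lambda>y. ?h i j y (L$i$j)) has_real_derivative
          lam * g' (Y$i$j) - rho * (X$i$j - Y$i$j) - L$i$j) (at (Y$i$j))"
    unfolding aug_lag_entry_def by (auto intro!: derivative_eq_intros deriv simp: field_simps)
  from DERIV_local_min[OF this, of 1] loc show ?thesis
    by (simp add: algebra_simps)
qed

lemma in_class_G_above_tangent:
  assumes "in_class_G g g' l"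
  shows "g t - g y \<ge> g' y * (t - y)"
proof (rule convex_on_imp_above_tangent)
  show "convex_on UNIV g" and "(g has_real_derivative g' y) (at y within UNIV)"
    using assms unfolding in_class_G_def by auto
qed auto

lemma aug_lag_entry_Y_step_decrease:
  fixes lam l rho a x y0 y1 \<mu>0 \<mu>1 :: real and g g' :: "real \<Rightarrow> real"
  assumes "lam \<ge> 0" "rho > 0"
    and tangent: "g y0 - g y1 \<ge> g' y1 * (y0 - y1)"
    and lip: "\<bar>g' y1 - g' y0\<bar> \<le> l * \<bar>y1 - y0\<bar>"
    and opt0: "lam * g' y0 = \<mu>0" and opt1: "lam * g' y1 = \<mu>1"
    and update: "\<mu>1 = \<mu>0 + rho * (x - y1)"
  shows "aug_lag_entry lam g rho a x y0 \<mu>0 - aug_lag_entry lam g rho a x y1 \<mu>1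
           \<ge> (rho/2 - (lam*l)^2/rho) * (y1 - y0)^2"
proof -
  define d where "d = y0 - y1"
  define u where "u = x - y1"
  have "(\<mu>0 + rho*u) * d = lam * (g' y1 * (y0 - y1))"
    using opt1 update unfolding d_def u_def by (simp add: mult.assoc)
  also have "\<dots> \<le> lam * (g y0 - g y1)"
    using mult_left_mono[OF tangent \<open>lam \<ge> 0\<close>] .
  finally have gain: "lam * (g y0 - g y1) \<ge> (\<mu>0 + rho*u) * d" .
  have "rho*u = lam * (g' y1 - g' y0)"
    using opt0 opt1 update unfolding u_def by (simp add: right_diff_distrib)
  then have "\<bar>rho*u\<bar> = lam * \<bar>g' y1 - g' y0\<bar>"
    using \<open>lam \<ge> 0\<close> by (simp add: abs_mult)
  also have "\<dots> \<le> lam * l * \<bar>d\<bar>"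
    using mult_left_mono[OF lip \<open>lam \<ge> 0\<close>] unfolding d_def by (simp add: abs_minus_commute)
  finally have "\<bar>rho*u\<bar>^2 \<le> (lam*l*\<bar>d\<bar>)^2"
    by (rule power_mono) simp
  then have "(rho*u)^2 \<le> (lam*l*d)^2"
    by (simp add: power_mult_distrib)
  then have loss: "rho*u^2 \<le> (lam*l)^2/rho * d^2"
    using \<open>rho > 0\<close> by (simp add: field_simps power2_eq_square)
  have "aug_lag_entry lam g rho a x y0 \<mu>0 - aug_lag_entry lam g rho a x y1 \<mu>1
      = lam * (g y0 - g y1) + rho/2 * d^2 - rho*u*d - \<mu>0*d - rho*u^2"
    unfolding aug_lag_entry_def d_def u_def update by (simp add: power2_eq_square algebra_simps)
  moreover have "(y1 - y0)^2 = d^2"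
    unfolding d_def by (simp add: power2_commute)
  ultimately show ?thesis
    using gain loss by (simp add: algebra_simps)
qed

lemma admm_Y_multiplier_step_decrease:
  assumes "lam \<ge> 0" "rho > 0" "in_class_G g g' l"
    and admm: "admm_iterates A lam g rho K X Y L"
  shows "aug_lag A lam g rho (X (Suc (Suc m))) (Y (Suc m)) (L (Suc m))
           - aug_lag A lam g rho (X (Suc (Suc m))) (Y (Suc (Suc m))) (L (Suc (Suc m)))
         \<ge> (rho/2 - (lam*l)^2/rho) * (frob_norm (Y (Suc (Suc m)) - Y (Suc m)))^2"
proof -
  have deriv: "\<And>x. (g has_real_derivative g' x) (at x)"
    and lip: "\<And>x1 x2. \<bar>g' x1 - g' x2\<bar> \<le> l * \<bar>x1 - x2\<bar>"
    using assms(3) unfolding in_class_G_def by blast+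
  have optimality: "lam * g' (Y (Suc k)$i$j) = L (Suc k)$i$j" for k i j
    using aug_lag_Y_minimizer_optimality[OF deriv, of A lam rho "X (Suc k)" "Y (Suc k)" "L k"]
      admm unfolding admm_iterates_def by simp
  let ?x = "X (Suc (Suc m))" and ?y0 = "Y (Suc m)" and ?y1 = "Y (Suc (Suc m))"
    and ?L0 = "L (Suc m)" and ?L1 = "L (Suc (Suc m))"
  have "aug_lag_entry lam g rho (A$i$j) (?x$i$j) (?y0$i$j) (?L0$i$j)
       - aug_lag_entry lam g rho (A$i$j) (?x$i$j) (?y1$i$j) (?L1$i$j)
       \<ge> (rho/2 - (lam*l)^2/rho) * (?y1$i$j - ?y0$i$j)^2" for i j
  proof (rule aug_lag_entry_Y_step_decrease[OF assms(1,2)])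
    show "g' (?y1$i$j) * (?y0$i$j - ?y1$i$j) \<le> g (?y0$i$j) - g (?y1$i$j)"
      using in_class_G_above_tangent[OF assms(3)] .
    show "\<bar>g' (?y1$i$j) - g' (?y0$i$j)\<bar> \<le> l * \<bar>?y1$i$j - ?y0$i$j\<bar>"
      using lip .
    show "?L1$i$j = ?L0$i$j + rho * (?x$i$j - ?y1$i$j)"
      using admm unfolding admm_iterates_def by simp
  qed (rule optimality)+
  then show ?thesis
    unfolding aug_lag_entrywise frob_norm_power2 sum_distrib_left sum_subtractf[symmetric]
    by (intro sum_mono) simp
qed

theorem lemma2:
  fixes A :: "real^'n^'n"
    and K :: nat and lam l rho :: real
    and g g' :: "real \<Rightarrow> real"
    and X Y L :: "nat \<Rightarrow> real^'n^'n"
  assumes "1 \<le> K" and "K < CARD('n)"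
    and "lam > 0" and "l > 0"
    and "in_class_G g g' l"
    and "rho = 3 * lam * l"
    and "admm_iterates A lam g rho K X Y L"
    and "k \<ge> 1"
  shows "aug_lag A lam g rho (X k) (Y k) (L k)
           - aug_lag A lam g rho (X (Suc k)) (Y (Suc k)) (L (Suc k))
         \<ge> 7 * l * lam / 6 * (frob_norm (Y (Suc k) - Y k))^2"
proof -
  obtain m where k: "k = Suc m"
    using assms(8) by (cases k) auto
  then have X_step: "aug_lag A lam g rho (X (Suc k)) (Y k) (L k) \<le> aug_lag A lam g rho (X k) (Y k) (L k)"
    using assms(7) unfolding admm_iterates_def by blast
  have rate: "rho/2 - (lam*l)^2/rho = 7 * l * lam / 6"
    using assms(3,4,6) by (simp add: field_simps power2_eq_square)
  have "rho > 0"
    using assms(3,4,6) by simp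
  have Y_step: "aug_lag A lam g rho (X (Suc k)) (Y k) (L k)
      - aug_lag A lam g rho (X (Suc k)) (Y (Suc k)) (L (Suc k))
      \<ge> 7 * l * lam / 6 * (frob_norm (Y (Suc k) - Y k))^2"
    using admm_Y_multiplier_step_decrease[OF _ \<open>rho > 0\<close> assms(5,7), of m, unfolded rate] assms(3)
    unfolding k by simp
  from X_step Y_step show ?thesis
    by linarith
qed

end
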